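(* Let $a,b,\epsilon>0$ and let $n,U,d,m$ be positive integers. Let $X\in\mathbb{R}^{n\times U\times d}$ satisfy $\|X_{i,u,\cdot}\|_2\le b$ for all $i\in\{1,\dots,n\}$ and $u\in\{1,\dots,U\}$, and let $M\in\mathbb{R}^{d\times m}$ be any fixed matrix. Then $$\log\mathcal{N}\Big(\{XA:\ A\in\mathbb{R}^{d\times m},\ \|A-M\|_{F}\le a\},\ \epsilon,\ \|\cdot\|_\infty\Big)\ \le\ \frac{36a^2b^2}{\epsilon^2}\log_2\!\Big[\Big(\frac{8ab}{\epsilon}+7\Big)mnU\Big],$$ where $\|\cdot\|_\infty$ is the maximum absolute entry on $\mathbb{R}^{n\times U\times m}$.
   Context: For $X\in\mathbb{R}^{n\times U\times d}$ and $A\in\mathbb{R}^{d\times m}$, $XA\in\mathbb{R}^{n\times U\times m}$ is defined by $(XA)_{i,u,j}=\sum_{o=1}^d X_{i,u,o}A_{o,j}$ (index $i$: sample, $u$: convolutional patch, $j$: output channel). $\|\cdot\|_F$ is the Frobenius norm. For a subset $V$ of a normed space $(\mathbb{R}^N,\|\cdot\|)$, the covering number $\mathcal{N}(V,\epsilon,\|\cdot\|)$ is the minimum cardinality $k$ of a collection $v^1,\dots,v^k\in\mathbb{R}^N$ with $\sup_{v\in V}\min_{j}\|v-v^j\|\le\epsilon$. $\log$ is the natural logarithm. *)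

theory Defs
  imports "HOL-Analysis.Analysis"
begin

text \<open>Tensors: X in R^{n x U x d} is real^'d^'u^'n (indices i,u,o), A in R^{d x m} is real^'m^'d.
  Dimensions n,U,d,m are CARD of the finite index types (automatically positive).\<close>

definition tmul :: "real^'d^'u^'n \<Rightarrow> real^'m^'d \<Rightarrow> real^'m^'u^'n" where
  "tmul X A = (\<chi> i u j. \<Sum>k\<in>UNIV. X$i$u$k * A$k$j)"

definition frob :: "real^'m^'d \<Rightarrow> real" where
  "frob A = sqrt (\<Sum>k\<in>UNIV. \<Sum>j\<in>UNIV. (A$k$j)^2)"

definition linf3 :: "real^'m^'u^'n \<Rightarrow> real" where
  "linf3 v = Max {\<bar>v$i$u$j\<bar> | i u j. True}"

definition covering_number :: "('a::ab_group_add \<Rightarrow> real) \<Rightarrow> 'a set \<Rightarrow> real \<Rightarrow> nat" where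
  "covering_number nrm V eps =
     (LEAST k. \<exists>C. finite C \<and> card C = k \<and> (\<forall>v\<in>V. \<exists>c\<in>C. nrm (v - c) \<le> eps))"

end

theory Submission
  imports Defs
begin

text \<open>A deterministic variant of Maurey's sparsification argument. Each entry of \<open>XA\<close> is an
  inner product \<open>\<langle>A, Z\<rangle>\<close> with a matrix \<open>Z\<close> of Frobenius norm at most \<open>b\<close>. Starting from
  \<open>A - M\<close>, repeatedly subtract \<open>\<plusminus>(\<epsilon>/b\<^sup>2) Z\<close> for some \<open>Z\<close> whose inner product with the residual
  exceeds \<open>\<epsilon>\<close> in absolute value; every such step lowers the squared norm of the residual by
  \<open>\<epsilon>\<^sup>2/b\<^sup>2\<close>, so after at most \<open>a\<^sup>2b\<^sup>2/\<epsilon>\<^sup>2\<close> steps all entries are within \<open>\<epsilon>\<close>. The centres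
  \<open>X(M + signed sum)\<close> are thus indexed by words of length at most \<open>K = \<lfloor>a\<^sup>2b\<^sup>2/\<epsilon>\<^sup>2\<rfloor>\<close> over an
  alphabet of \<open>2mnU\<close> signed entries, giving at most \<open>(2mnU + 1)\<^sup>K\<close> centres.\<close>

definition signed_sum :: "real \<Rightarrow> ('i \<Rightarrow> 'a::real_vector) \<Rightarrow> ('i \<times> bool) list \<Rightarrow> 'a" where
  "signed_sum \<eta> x L = sum_list (map (\<lambda>(i, s). (if s then \<eta> else - \<eta>) *\<^sub>R x i) L)"

lemma signed_sum_Nil [simp]: "signed_sum \<eta> x [] = 0"
  by (simp add: signed_sum_def)

lemma signed_sum_Cons [simp]:
  "signed_sum \<eta> x ((i, s) # L) = (if s then \<eta> else - \<eta>) *\<^sub>R x i + signed_sum \<eta> x L"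
  by (simp add: signed_sum_def)

lemma greedy_step_norm_decrease:
  fixes r y :: "'a::real_inner"
  assumes "b > 0" and "eps \<ge> 0" and "norm y \<le> b" and "eps < \<bar>inner r y\<bar>"
  shows "(norm (r - (if inner r y > 0 then eps / b\<^sup>2 else - (eps / b\<^sup>2)) *\<^sub>R y))\<^sup>2
           \<le> (norm r)\<^sup>2 - eps\<^sup>2 / b\<^sup>2"
proof -
  define \<eta> where "\<eta> = eps / b\<^sup>2"
  define t where "t = (if inner r y > 0 then \<eta> else - \<eta>)"
  have \<eta>_nonneg: "\<eta> \<ge> 0" using assms(1,2) by (simp add: \<eta>_def)
  have "t * inner r y = \<eta> * \<bar>inner r y\<bar>" and "t\<^sup>2 = \<eta>\<^sup>2"
    by (auto simp: t_def)
  then have "(norm (r - t *\<^sub>R y))\<^sup>2 = (norm r)\<^sup>2 - 2 * \<eta> * \<bar>inner r y\<bar> + \<eta>\<^sup>2 * (norm y)\<^sup>2"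
    unfolding power2_norm_eq_inner
    by (simp add: inner_diff_left inner_diff_right inner_commute algebra_simps power2_eq_square)
  also have "\<dots> \<le> (norm r)\<^sup>2 - 2 * \<eta> * eps + \<eta>\<^sup>2 * b\<^sup>2"
    using assms(3,4) \<eta>_nonneg
    by (intro add_mono diff_mono mult_left_mono power_mono) auto
  also have "\<dots> = (norm r)\<^sup>2 - eps\<^sup>2 / b\<^sup>2"
    using assms(1) by (simp add: \<eta>_def field_simps power2_eq_square)
  finally show ?thesis by (simp only: t_def \<eta>_def)
qed

lemma greedy_residual:
  fixes x :: "'i \<Rightarrow> 'a::real_inner"
  assumes "b > 0" and "eps \<ge> 0" and "\<forall>i. norm (x i) \<le> b"
  shows "(norm r)\<^sup>2 < real (Suc n) * (eps\<^sup>2 / b\<^sup>2) \<Longrightarrow>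
    \<exists>L. length L \<le> n \<and> (\<forall>i. \<bar>inner (r - signed_sum (eps / b\<^sup>2) x L) (x i)\<bar> \<le> eps)"
proof (induction n arbitrary: r)
  case (0 r)
  show ?case
  proof (intro exI[of _ "[]"] conjI allI)
    fix i
    show "\<bar>inner (r - signed_sum (eps / b\<^sup>2) x []) (x i)\<bar> \<le> eps"
    proof (rule ccontr)
      assume "\<not> ?thesis"
      then have bad: "eps < \<bar>inner r (x i)\<bar>" by simp
      have "norm (x i) \<le> b" using assms(3) by blast
      from greedy_step_norm_decrease[OF assms(1,2) this bad]
      have "0 \<le> (norm r)\<^sup>2 - eps\<^sup>2 / b\<^sup>2" by (rule order_trans[OF zero_le_power2])
      with "0" show False by simp
    qed
  qed simp
next
  case (Suc m r)
  show ?case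
  proof (cases "\<forall>i. \<bar>inner r (x i)\<bar> \<le> eps")
    case True
    then show ?thesis by (intro exI[of _ "[]"]) simp
  next
    case False
    then obtain i where bad: "eps < \<bar>inner r (x i)\<bar>" by (auto simp: not_le)
    define s where "s = (inner r (x i) > 0)"
    define r' where "r' = r - (if s then eps / b\<^sup>2 else - (eps / b\<^sup>2)) *\<^sub>R x i"
    have "(norm r')\<^sup>2 \<le> (norm r)\<^sup>2 - eps\<^sup>2 / b\<^sup>2"
      unfolding r'_def s_def using greedy_step_norm_decrease[OF assms(1,2) _ bad] assms(3) by blast
    moreover have "real (Suc (Suc m)) * c = real (Suc m) * c + c" for c :: real
      by (simp add: algebra_simps)
    ultimately have "(norm r')\<^sup>2 < real (Suc m) * (eps\<^sup>2 / b\<^sup>2)"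
      using Suc.prems by (metis add_less_cancel_right diff_add_cancel order.strict_trans1)
    then obtain L where "length L \<le> m"
      and close: "\<forall>j. \<bar>inner (r' - signed_sum (eps / b\<^sup>2) x L) (x j)\<bar> \<le> eps"
      using Suc.IH by blast
    have "r' - signed_sum (eps / b\<^sup>2) x L = r - signed_sum (eps / b\<^sup>2) x ((i, s) # L)"
      by (simp add: r'_def)
    with \<open>length L \<le> m\<close> close show ?thesis
      by (intro exI[of _ "(i, s) # L"]) auto
  qed
qed

lemma greedy_approximation:
  fixes x :: "'i \<Rightarrow> 'a::real_inner"
  assumes "b > 0" and "eps > 0" and "\<forall>i. norm (x i) \<le> b" and "norm r \<le> a"
  shows "\<exists>L. length L \<le> nat \<lfloor>a\<^sup>2 * b\<^sup>2 / eps\<^sup>2\<rfloor>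
           \<and> (\<forall>i. \<bar>inner (r - signed_sum (eps / b\<^sup>2) x L) (x i)\<bar> \<le> eps)"
proof (rule greedy_residual[OF assms(1) _ assms(3)])
  have "(norm r)\<^sup>2 \<le> a\<^sup>2"
    using assms(4) norm_ge_zero power_mono by blast
  also have "\<dots> = (a\<^sup>2 * b\<^sup>2 / eps\<^sup>2) * (eps\<^sup>2 / b\<^sup>2)"
    using assms(1,2) by (simp add: field_simps)
  also have "\<dots> < real (Suc (nat \<lfloor>a\<^sup>2 * b\<^sup>2 / eps\<^sup>2\<rfloor>)) * (eps\<^sup>2 / b\<^sup>2)"
    using assms(1,2) floor_correct[of "a\<^sup>2 * b\<^sup>2 / eps\<^sup>2"]
    by (intro mult_strict_right_mono) (simp_all, linarith)
  finally show "(norm r)\<^sup>2 < real (Suc (nat \<lfloor>a\<^sup>2 * b\<^sup>2 / eps\<^sup>2\<rfloor>)) * (eps\<^sup>2 / b\<^sup>2)" .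
qed (use assms(2) in simp)

lemma sum_power_le_Suc_power: "(\<Sum>i\<le>K. q ^ i) \<le> (q + 1 :: nat) ^ K"
proof (induction K)
  case (Suc K)
  have "(\<Sum>i\<le>Suc K. q ^ i) = 1 + q * (\<Sum>i\<le>K. q ^ i)"
    by (simp only: sum.atMost_Suc_shift power_0 power_Suc sum_distrib_left)
  also have "\<dots> \<le> 1 + q * (q + 1) ^ K"
    using Suc.IH by simp
  also have "\<dots> \<le> (q + 1) ^ Suc K"
    by (simp add: algebra_simps)
  finally show ?case .
qed simp

lemma cball_cover_by_signed_sums:
  fixes x :: "'i::finite \<Rightarrow> 'a::real_inner" and M :: 'a
  assumes "b > 0" and "eps > 0" and "\<forall>i. norm (x i) \<le> b"
  shows "\<exists>C. finite C \<and> card C \<le> (2 * CARD('i) + 1) ^ nat \<lfloor>a\<^sup>2 * b\<^sup>2 / eps\<^sup>2\<rfloor>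
           \<and> (\<forall>A. norm (A - M) \<le> a \<longrightarrow> (\<exists>c\<in>C. \<forall>i. \<bar>inner (A - c) (x i)\<bar> \<le> eps))"
proof -
  define K where "K = nat \<lfloor>a\<^sup>2 * b\<^sup>2 / eps\<^sup>2\<rfloor>"
  define Ls where "Ls = {L. set L \<subseteq> (UNIV :: ('i \<times> bool) set) \<and> length L \<le> K}"
  define C where "C = (\<lambda>L. M + signed_sum (eps / b\<^sup>2) x L) ` Ls"
  have "finite Ls"
    unfolding Ls_def by (rule finite_lists_length_le) simp
  have "card C \<le> card Ls"
    unfolding C_def using \<open>finite Ls\<close> by (rule card_image_le)
  also have "card Ls = (\<Sum>i\<le>K. (2 * CARD('i)) ^ i)"
    unfolding Ls_def by (subst card_lists_length_le) (simp_all add: mult.commute)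
  also have "\<dots> \<le> (2 * CARD('i) + 1) ^ K"
    by (rule sum_power_le_Suc_power)
  finally have "card C \<le> (2 * CARD('i) + 1) ^ K" .
  moreover have "\<exists>c\<in>C. \<forall>i. \<bar>inner (A - c) (x i)\<bar> \<le> eps" if A_near: "norm (A - M) \<le> a" for A
  proof -
    obtain L where "length L \<le> K"
      and close: "\<forall>i. \<bar>inner (A - M - signed_sum (eps / b\<^sup>2) x L) (x i)\<bar> \<le> eps"
      using greedy_approximation[OF assms A_near] unfolding K_def by blast
    then have "M + signed_sum (eps / b\<^sup>2) x L \<in> C"
      unfolding C_def Ls_def by blast
    with close show ?thesis
      by (metis diff_diff_eq)
  qed
  ultimately show ?thesis
    using \<open>finite Ls\<close> unfolding K_def C_def by blast
qed

definition entry_rep :: "real^'d^'u^'n \<Rightarrow> 'n \<times> 'u \<times> 'm \<Rightarrow> real^'m^'d" where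
  "entry_rep X = (\<lambda>(i, u, j). \<chi> k l. if l = j then X$i$u$k else 0)"

lemma tmul_eq_inner_entry_rep: "tmul X A $ i $ u $ j = inner A (entry_rep X (i, u, j))"
  unfolding tmul_def entry_rep_def inner_vec_def by (simp add: if_distrib mult.commute cong: if_cong)

lemma norm_entry_rep: "norm (entry_rep X (i, u, j)) = norm (X $ i $ u)"
  unfolding norm_eq_sqrt_inner
  by (simp add: entry_rep_def inner_vec_def if_distrib cong: if_cong)

lemma tmul_diff: "tmul X A - tmul X B = tmul X (A - B)"
  by (simp add: tmul_def vec_eq_iff sum_subtractf algebra_simps)

lemma frob_eq_norm: "frob A = norm A"
  unfolding frob_def norm_eq_sqrt_inner inner_vec_def by (simp add: power2_eq_square)

lemma linf3_le_iff: "linf3 v \<le> e \<longleftrightarrow> (\<forall>i u j. \<bar>v$i$u$j\<bar> \<le> e)"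
proof -
  have "{\<bar>v$i$u$j\<bar> | i u j. True} = (\<lambda>(i, u, j). \<bar>v$i$u$j\<bar>) ` UNIV"
  proof (intro equalityI subsetI)
    fix y assume "y \<in> {\<bar>v$i$u$j\<bar> | i u j. True}"
    then obtain i u j where "y = \<bar>v$i$u$j\<bar>" by blast
    then show "y \<in> (\<lambda>(i, u, j). \<bar>v$i$u$j\<bar>) ` UNIV"
      by (intro image_eqI[of _ _ "(i, u, j)"]) auto
  qed auto
  then show ?thesis
    unfolding linf3_def by (subst Max_le_iff) auto
qed

lemma covering_number_le_card:
  assumes "finite C" and "\<forall>v\<in>V. \<exists>c\<in>C. nrm (v - c) \<le> eps"
  shows "covering_number nrm V eps \<le> card C"
  unfolding covering_number_def by (rule Least_le) (use assms in blast)

lemma covering_number_pos: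
  assumes "V \<noteq> {}" and "finite C" and "\<forall>v\<in>V. \<exists>c\<in>C. nrm (v - c) \<le> eps"
  shows "covering_number nrm V eps > 0"
proof -
  obtain C' where "finite C'" and "card C' = covering_number nrm V eps"
    and "\<forall>v\<in>V. \<exists>c\<in>C'. nrm (v - c) \<le> eps"
    unfolding covering_number_def using LeastI_ex[of "\<lambda>k. \<exists>C. finite C \<and> card C = k \<and>
      (\<forall>v\<in>V. \<exists>c\<in>C. nrm (v - c) \<le> eps)"] assms(2,3) by blast
  with assms(1) show ?thesis
    by (metis card_gt_0_iff empty_iff ex_in_conv)
qed

lemma ln_power_le_log2:
  assumes "q \<ge> 1" and "real q \<le> y" and "real K \<le> c"
  shows "ln (real (q ^ K)) \<le> c * log 2 y"
proof -
  have "ln (real (q ^ K)) = real K * ln (real q)"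
    by (simp add: ln_realpow)
  also have "\<dots> \<le> c * ln y"
    using assms by (intro mult_mono ln_mono) auto
  also have "\<dots> \<le> c * log 2 y"
  proof (intro mult_left_mono)
    have "ln y \<ge> 0" using assms(1,2) by simp
    then show "ln y \<le> log 2 y"
      using ln_2_less_1 by (simp add: log_def le_divide_eq mult_left_le)
  qed (use assms in simp)
  finally show ?thesis .
qed

lemma tmul_cball_cover:
  fixes X :: "real^'d^'u^'n" and M :: "real^'m^'d"
  assumes "b > 0" and "eps > 0" and "\<forall>i u. norm (X$i$u) \<le> b"
  shows "\<exists>C. finite C \<and> card C \<le> (2 * CARD('n \<times> 'u \<times> 'm) + 1) ^ nat \<lfloor>a\<^sup>2 * b\<^sup>2 / eps\<^sup>2\<rfloor>
           \<and> (\<forall>v\<in>{tmul X A | A. frob (A - M) \<le> a}. \<exists>c\<in>C. linf3 (v - c) \<le> eps)"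
proof -
  have "\<forall>p. norm (entry_rep X p) \<le> b"
    using assms(3) by (auto simp: norm_entry_rep)
  from cball_cover_by_signed_sums[OF assms(1,2) this, of a M]
  obtain C where "finite C"
    and card_C: "card C \<le> (2 * CARD('n \<times> 'u \<times> 'm) + 1) ^ nat \<lfloor>a\<^sup>2 * b\<^sup>2 / eps\<^sup>2\<rfloor>"
    and near: "\<forall>A. norm (A - M) \<le> a \<longrightarrow> (\<exists>c\<in>C. \<forall>p. \<bar>inner (A - c) (entry_rep X p)\<bar> \<le> eps)"
    by blast
  have "\<exists>c\<in>tmul X ` C. linf3 (tmul X A - c) \<le> eps" if "frob (A - M) \<le> a" for A
  proof -
    from near that obtain c where "c \<in> C"
      and close: "\<forall>p. \<bar>inner (A - c) (entry_rep X p)\<bar> \<le> eps"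
      unfolding frob_eq_norm by blast
    have "linf3 (tmul X A - tmul X c) \<le> eps"
      unfolding tmul_diff linf3_le_iff tmul_eq_inner_entry_rep using close by blast
    with \<open>c \<in> C\<close> show ?thesis by blast
  qed
  then show ?thesis
    using \<open>finite C\<close> card_image_le[OF \<open>finite C\<close>, of "tmul X"] card_C
    by (intro exI[of _ "tmul X ` C"]) auto
qed

theorem mainTheorem1:
  fixes a b eps :: real
    and X :: "real^'d^'u^'n"
    and M :: "real^'m^'d"
  assumes "a > 0" and "b > 0" and "eps > 0"
    and "\<forall>i u. norm (X$i$u) \<le> b"
  shows "ln (real (covering_number linf3 {tmul X A | A. frob (A - M) \<le> a} eps))
     \<le> 36 * a^2 * b^2 / eps^2
        * log 2 ((8 * a * b / eps + 7) * real CARD('m) * real CARD('n) * real CARD('u))"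
proof -
  define V where "V = {tmul X A | A. frob (A - M) \<le> a}"
  define N where "N = CARD('n \<times> 'u \<times> 'm)"
  define K where "K = nat \<lfloor>a\<^sup>2 * b\<^sup>2 / eps\<^sup>2\<rfloor>"
  define y where "y = (8 * a * b / eps + 7) * real CARD('m) * real CARD('n) * real CARD('u)"
  have "N \<ge> 1"
    unfolding N_def using zero_less_card_finite by (simp only: Suc_le_eq One_nat_def)
  then have "real (2 * N + 1) \<le> 7 * real N" by simp
  also have "\<dots> \<le> y"
    using assms(1-3) by (simp add: y_def N_def mult_right_mono)
  finally have y_ge: "real (2 * N + 1) \<le> y" .
  obtain C where "finite C" and "card C \<le> (2 * N + 1) ^ K"
    and cover: "\<forall>v\<in>V. \<exists>c\<in>C. linf3 (v - c) \<le> eps"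
    using tmul_cball_cover[OF assms(2-4)] unfolding V_def N_def K_def by blast
  have "tmul X M \<in> V"
    unfolding V_def frob_eq_norm using assms(1) by (intro CollectI exI[of _ M]) simp
  then have "0 < covering_number linf3 V eps"
    using covering_number_pos[OF _ \<open>finite C\<close> cover] by blast
  moreover have "covering_number linf3 V eps \<le> (2 * N + 1) ^ K"
    using covering_number_le_card[OF \<open>finite C\<close> cover] \<open>card C \<le> _\<close> by linarith
  ultimately have "ln (real (covering_number linf3 V eps)) \<le> ln (real ((2 * N + 1) ^ K))"
    by (intro ln_mono) (simp_all only: of_nat_0_less_iff of_nat_le_iff)
  also have "\<dots> \<le> a\<^sup>2 * b\<^sup>2 / eps\<^sup>2 * log 2 y"
    using y_ge by (intro ln_power_le_log2) (simp_all add: K_def)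
  also have "\<dots> \<le> 36 * a^2 * b^2 / eps^2 * log 2 y"
    using y_ge assms(3) by (intro mult_right_mono) (auto simp: field_simps)
  finally show ?thesis
    unfolding V_def y_def .
qed

end
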